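(* Let $G$ be a finite group with identity $e$ and $H$ a normal subgroup of $G$ with $|H|=3$. Then the following two conditions are equivalent: (a) for every $x\in G\setminus H$, one has $x^2\in H$ and the coset $Hx$ contains an element of order at least $3$; (b) there exist $n\ge 0$ and an isomorphism $G\cong\mathbb{Z}_2^n\times\mathbb{Z}_3$ mapping $H$ onto the subgroup $\{(0,\dots,0,0),(0,\dots,0,1),(0,\dots,0,2)\}=\{0\}^n\times\mathbb{Z}_3$. *)

theory Defs
  imports "HOL-Algebra.Elementary_Groups" "HOL-Algebra.Multiplicative_Group" "HOL-Algebra.Product_Groups"
begin

definition Z2n_Z3 :: "nat \<Rightarrow> ((nat \<Rightarrow> int) \<times> int) monoid" where
  "Z2n_Z3 n = product_group {..<n} (\<lambda>_. integer_mod_group 2) \<times>\<times> integer_mod_group 3"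

definition Z3_factor :: "nat \<Rightarrow> ((nat \<Rightarrow> int) \<times> int) set" where
  "Z3_factor n = {\<one>\<^bsub>product_group {..<n} (\<lambda>_. integer_mod_group 2)\<^esub>} \<times> carrier (integer_mod_group 3)"

end

theory Submission
  imports Defs
begin

(*
  (a) \<Longrightarrow> (b).  For x \<notin> H the coset Hx contains some y with y\<^sup>2 \<noteq> 1;
  as y\<^sup>2 \<in> H - {1} generates H, y centralises H, and therefore so does x.  So H is central and
  contains every square.  For x, y \<in> G the commutator k = x\<^sup>-\<^sup>1 y x y\<^sup>-\<^sup>1 then lies in H, and
  conjugating y by the central element x\<^sup>2 gives k\<^sup>2 = 1, whence k = 1 as |H| is odd.  Thus G
  is abelian and is the internal direct product of H and its 2-torsion subgroup E, because
  g = g\<^sup>3 g\<^sup>4 with g\<^sup>3 \<in> E and g\<^sup>4 \<in> H.  A maximal independent family of involutions identifies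
  E with \<int>\<^sub>2\<^sup>n.

  (b) \<Longrightarrow> (a).  In \<int>\<^sub>2\<^sup>n \<times> \<int>\<^sub>3 all squares lie in {0}\<^sup>n \<times> \<int>\<^sub>3, and the coset of (v, k)
  contains (v, 1), whose double (0, 2) is not zero.
*)

context group
begin

lemma ord_ge_3_iff_square_ne_one:
  assumes "finite (carrier G)" and "y \<in> carrier G"
  shows "3 \<le> ord y \<longleftrightarrow> y \<otimes> y \<noteq> \<one>"
proof -
  have "y \<otimes> y = \<one> \<longleftrightarrow> ord y dvd 2"
    using pow_eq_id[OF assms(2), of 2] assms(2) by (simp add: numeral_2_eq_2)
  moreover have "ord y dvd 2 \<longleftrightarrow> ord y \<le> 2"
  proof
    assume "ord y \<le> 2"
    then have "ord y = 1 \<or> ord y = 2"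
      using ord_ge_1[OF assms] by linarith
    then show "ord y dvd 2"
      by auto
  qed (simp add: dvd_imp_le)
  ultimately show ?thesis
    by linarith
qed

lemma int_pow_two: "x \<in> carrier G \<Longrightarrow> x [^] (2::int) = x \<otimes> x"
  by (simp add: int_pow_def2 numeral_2_eq_2)

lemma int_pow_hom_integer_mod_group:
  assumes "a \<in> carrier G" and "a [^] n = \<one>"
  shows "(\<lambda>k::int. a [^] k) \<in> hom (integer_mod_group n) G"
proof (rule homI)
  fix k l :: int
  have "int (ord a) dvd int n"
    using assms by (simp add: pow_eq_id)
  then have "int (ord a) dvd (k + l) - (k + l) mod int n"
    by (simp add: minus_mod_eq_mult_div)
  then have "a [^] ((k + l) mod int n) = a [^] (k + l)"
    using assms(1) by (simp add: int_pow_eq)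
  then show "a [^] (k \<otimes>\<^bsub>integer_mod_group n\<^esub> l) = a [^] k \<otimes> a [^] l"
    using assms(1) by (simp add: int_pow_mult)
qed (use assms(1) in simp)

lemma subgroup_card_3_cyclic:
  assumes "subgroup H G" and "card H = 3"
  obtains h where "h \<in> carrier G" "h \<otimes> h \<otimes> h = \<one>" "H = {\<one>, h, h \<otimes> h}"
proof -
  interpret H: subgroup H G by (rule assms(1))
  have "card (H - {\<one>}) = 2"
    using assms(2) by simp
  then obtain a b where ab: "H - {\<one>} = {a, b}" "a \<noteq> b"
    unfolding card_2_iff by blast
  then have H_eq: "H = {\<one>, a, b}" and a: "a \<in> H" "a \<noteq> \<one>" and b: "b \<in> H" "b \<noteq> \<one>"
    using H.one_closed by blast+
  have aG: "a \<in> carrier G" and bG: "b \<in> carrier G"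
    using a b by auto
  have "a \<otimes> a \<noteq> \<one>"
  proof
    assume aa: "a \<otimes> a = \<one>"
    have "a \<otimes> b \<noteq> \<one>"
      using aa ab(2) aG bG by (metis Units_eq Units_l_cancel)
    moreover have "a \<otimes> b \<noteq> a" "a \<otimes> b \<noteq> b"
      using a(2) b(2) aG bG by simp_all
    ultimately show False
      using H_eq H.m_closed[OF a(1) b(1)] by blast
  qed
  moreover have "a \<otimes> a \<noteq> a"
    using a(2) aG by simp
  ultimately have b_eq: "b = a \<otimes> a"
    using H_eq H.m_closed[OF a(1) a(1)] by blast
  have "a \<otimes> a \<otimes> a \<noteq> a" "a \<otimes> a \<otimes> a \<noteq> a \<otimes> a"
    using a(2) b(2) b_eq aG by simp_all
  then have "a \<otimes> a \<otimes> a = \<one>"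
    using H_eq b_eq H.m_closed[OF H.m_closed[OF a(1) a(1)] a(1)] by blast
  then show thesis
    using that aG H_eq b_eq by blast
qed

lemma subgroup_card_3_cube:
  assumes "subgroup H G" and "card H = 3" and "z \<in> H"
  shows "z \<otimes> z \<otimes> z = \<one>"
proof -
  obtain h where h: "h \<in> carrier G" "h \<otimes> h \<otimes> h = \<one>" and H_eq: "H = {\<one>, h, h \<otimes> h}"
    using subgroup_card_3_cyclic[OF assms(1,2)] by metis
  have "h \<otimes> h \<otimes> (h \<otimes> h) \<otimes> (h \<otimes> h) = (h \<otimes> h \<otimes> h) \<otimes> (h \<otimes> h \<otimes> h)"
    using h(1) by (simp add: m_assoc)
  then show ?thesis
    using assms(3) h by (auto simp: H_eq)
qed

lemma subgroup_card_3_square_eq_one: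
  assumes "subgroup H G" and "card H = 3" and "z \<in> H" and "z \<otimes> z = \<one>"
  shows "z = \<one>"
  using subgroup_card_3_cube[OF assms(1-3)] assms(3,4) subgroup.mem_carrier[OF assms(1)] by simp

lemma subgroup_card_3_comm:
  assumes "subgroup H G" and "card H = 3" and "u \<in> H" and "v \<in> H"
  shows "u \<otimes> v = v \<otimes> u"
proof -
  obtain h where "h \<in> carrier G" and H_eq: "H = {\<one>, h, h \<otimes> h}"
    using subgroup_card_3_cyclic[OF assms(1,2)] by metis
  then show ?thesis
    using assms(3,4) by (auto simp: m_assoc)
qed

lemma subgroup_card_3_generated:
  assumes "subgroup H G" and "card H = 3" and "k \<in> H" and "k \<noteq> \<one>"
  shows "H = {\<one>, k, k \<otimes> k}"
proof -
  obtain h where h: "h \<in> carrier G" "h \<otimes> h \<otimes> h = \<one>" and H_eq: "H = {\<one>, h, h \<otimes> h}"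
    using subgroup_card_3_cyclic[OF assms(1,2)] by metis
  have "(h \<otimes> h) \<otimes> (h \<otimes> h) = (h \<otimes> h \<otimes> h) \<otimes> h"
    using h(1) by (simp add: m_assoc)
  then have "(h \<otimes> h) \<otimes> (h \<otimes> h) = h"
    using h by simp
  then show ?thesis
    using assms(3,4) H_eq by auto
qed

lemma subgroup_card_3_embedding:
  assumes "subgroup H G" and "card H = 3"
  obtains g where "g \<in> hom (integer_mod_group 3) G" "inj_on g (carrier (integer_mod_group 3))"
    "g ` carrier (integer_mod_group 3) = H"
proof -
  obtain h where h: "h \<in> carrier G" "h \<otimes> h \<otimes> h = \<one>" and H_eq: "H = {\<one>, h, h \<otimes> h}"
    using subgroup_card_3_cyclic[OF assms] by metis
  let ?g = "\<lambda>k::int. h [^] k"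
  have "?g \<in> hom (integer_mod_group 3) G"
    using h by (intro int_pow_hom_integer_mod_group) (simp_all add: numeral_3_eq_3)
  moreover have "{0..<3::int} = {0, 1, 2}"
    by auto
  then have image: "?g ` carrier (integer_mod_group 3) = H"
    using h(1) by (simp add: carrier_integer_mod_group H_eq int_pow_two)
  moreover have "inj_on ?g (carrier (integer_mod_group 3))"
    using image assms(2) by (simp add: inj_on_iff_eq_card carrier_integer_mod_group)
  ultimately show thesis
    using that by blast
qed

lemma subgroup_card_3_central:
  assumes H: "subgroup H G" "card H = 3"
    and squares: "\<And>x. x \<in> carrier G \<Longrightarrow> x \<otimes> x \<in> H"
    and non_involution: "\<And>x. x \<in> carrier G - H \<Longrightarrow> \<exists>y \<in> H #> x. y \<otimes> y \<noteq> \<one>"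
    and z: "z \<in> H" and x: "x \<in> carrier G"
  shows "z \<otimes> x = x \<otimes> z"
proof (cases "x \<in> H")
  case True
  then show ?thesis
    using subgroup_card_3_comm[OF H z] by blast
next
  case False
  then obtain y where "y \<in> H #> x" and yy: "y \<otimes> y \<noteq> \<one>"
    using non_involution x by blast
  then obtain w where w: "w \<in> H" and y_eq: "y = w \<otimes> x"
    unfolding r_coset_def by blast
  have zG: "z \<in> carrier G" and wG: "w \<in> carrier G"
    using z w subgroup.mem_carrier[OF H(1)] by auto
  then have y: "y \<in> carrier G"
    using x y_eq by simp
  have "z \<in> {\<one>, y \<otimes> y, (y \<otimes> y) \<otimes> (y \<otimes> y)}"
    using subgroup_card_3_generated[OF H squares[OF y] yy] z by blast
  then have zy: "z \<otimes> y = y \<otimes> z"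
    using y by (auto simp: m_assoc)
  have "w \<otimes> (z \<otimes> x) = z \<otimes> y"
    using subgroup_card_3_comm[OF H z w] zG wG x by (simp add: y_eq flip: m_assoc)
  also have "\<dots> = w \<otimes> (x \<otimes> z)"
    using zy zG wG x by (simp add: y_eq m_assoc)
  finally show ?thesis
    using zG wG x by simp
qed

lemma comm_group_if_squares_in_central_subgroup:
  assumes H: "subgroup H G"
    and central: "\<And>z x. z \<in> H \<Longrightarrow> x \<in> carrier G \<Longrightarrow> z \<otimes> x = x \<otimes> z"
    and squares: "\<And>x. x \<in> carrier G \<Longrightarrow> x \<otimes> x \<in> H"
    and no_involution: "\<And>z. z \<in> H \<Longrightarrow> z \<otimes> z = \<one> \<Longrightarrow> z = \<one>"
  shows "comm_group G"
proof (rule group_comm_groupI)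
  interpret H: subgroup H G by (rule H)
  fix x y
  assume x: "x \<in> carrier G" and y: "y \<in> carrier G"
  have cancel: "inv a \<otimes> (a \<otimes> b) = b" "a \<otimes> (inv a \<otimes> b) = b"
    if "a \<in> carrier G" "b \<in> carrier G" for a b
    using that by (simp_all flip: m_assoc)
  define k where "k = inv x \<otimes> y \<otimes> x \<otimes> inv y"
  have "k = inv (x \<otimes> x) \<otimes> ((x \<otimes> y) \<otimes> (x \<otimes> y)) \<otimes> inv (y \<otimes> y)"
    using x y by (simp add: k_def m_assoc inv_mult_group cancel)
  then have k: "k \<in> H"
    using x y squares by simp
  have kG: "k \<in> carrier G"
    using k by auto
  have conj: "inv x \<otimes> y \<otimes> x = k \<otimes> y"
    using x y by (simp add: k_def m_assoc)
  have "y = inv (x \<otimes> x) \<otimes> ((x \<otimes> x) \<otimes> y)"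
    using x y by (simp add: cancel)
  also have "\<dots> = inv (x \<otimes> x) \<otimes> (y \<otimes> (x \<otimes> x))"
    using central[OF squares[OF x] y] by simp
  also have "\<dots> = inv x \<otimes> (inv x \<otimes> y \<otimes> x) \<otimes> x"
    using x y by (simp add: m_assoc inv_mult_group)
  also have "\<dots> = (inv x \<otimes> k) \<otimes> y \<otimes> x"
    using x y kG by (simp add: conj m_assoc)
  also have "\<dots> = (k \<otimes> inv x) \<otimes> y \<otimes> x"
    using central[OF k, of "inv x"] x by simp
  also have "\<dots> = k \<otimes> (inv x \<otimes> y \<otimes> x)"
    using x y kG by (simp add: m_assoc)
  also have "\<dots> = k \<otimes> k \<otimes> y"
    using y kG by (simp add: conj m_assoc)
  finally have "y = k \<otimes> k \<otimes> y" .
  then have "k = \<one>"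
    using no_involution[OF k] kG y by simp
  then have "inv x \<otimes> y \<otimes> x = y"
    using conj y by simp
  then show "x \<otimes> y = y \<otimes> x"
    using x y by (metis inv_closed m_assoc m_closed r_inv l_one)
qed

end

definition two_torsion :: "('a, 'b) monoid_scheme \<Rightarrow> 'a set" where
  "two_torsion G = {x \<in> carrier G. x \<otimes>\<^bsub>G\<^esub> x = \<one>\<^bsub>G\<^esub>}"

lemma (in group) two_torsion_mult_subgroup_card_3:
  assumes H: "subgroup H G" "card H = 3" and squares: "\<And>x. x \<in> carrier G \<Longrightarrow> x \<otimes> x \<in> H"
  shows "two_torsion G <#> H = carrier G"
proof
  show "two_torsion G <#> H \<subseteq> carrier G"
    using subgroup.subset[OF H(1)] by (auto simp: set_mult_def two_torsion_def)
  show "carrier G \<subseteq> two_torsion G <#> H"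
  proof
    fix x
    assume x: "x \<in> carrier G"
    have cube: "(x \<otimes> x) \<otimes> (x \<otimes> x) \<otimes> (x \<otimes> x) = \<one>"
      using subgroup_card_3_cube[OF H squares[OF x]] .
    then have "x \<otimes> x \<otimes> x \<in> two_torsion G"
      using x by (simp add: two_torsion_def m_assoc)
    moreover have "(x \<otimes> x) \<otimes> (x \<otimes> x) \<in> H"
      using squares x by (simp add: subgroup.m_closed[OF H(1)])
    moreover have "x = (x \<otimes> x \<otimes> x) \<otimes> ((x \<otimes> x) \<otimes> (x \<otimes> x))"
      using cube x by (simp add: m_assoc)
    ultimately show "x \<in> two_torsion G <#> H"
      unfolding set_mult_def by blast
  qed
qed

lemma (in group_hom) inj_on_if_trivial_kernel:
  assumes "\<And>x. x \<in> carrier G \<Longrightarrow> h x = \<one>\<^bsub>H\<^esub> \<Longrightarrow> x = \<one>"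
  shows "inj_on h (carrier G)"
  unfolding inj_iff_trivial_ker using assms by (auto simp: kernel_def)

context comm_group
begin

lemma hom_product_group_finprod:
  assumes "finite I" and hom: "\<And>i. i \<in> I \<Longrightarrow> f i \<in> hom (A i) G"
  shows "(\<lambda>x. finprod G (\<lambda>i. f i (x i)) I) \<in> hom (product_group I A) G"
proof (rule homI)
  have f_carrier: "f i (x i) \<in> carrier G" if "i \<in> I" "x \<in> carrier (product_group I A)" for i x
    using hom[OF that(1)] that by (auto simp: hom_def PiE_iff)
  then show "finprod G (\<lambda>i. f i (x i)) I \<in> carrier G"
    if "x \<in> carrier (product_group I A)" for x
    using that by (auto intro: finprod_closed)
  fix x y
  assume x: "x \<in> carrier (product_group I A)" and y: "y \<in> carrier (product_group I A)"
  have "finprod G (\<lambda>i. f i ((x \<otimes>\<^bsub>product_group I A\<^esub> y) i)) I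
      = finprod G (\<lambda>i. f i (x i) \<otimes> f i (y i)) I"
    using x y f_carrier[OF _ x] f_carrier[OF _ y]
    by (intro finprod_cong') (auto simp: PiE_iff hom_mult[OF hom])
  also have "\<dots> = finprod G (\<lambda>i. f i (x i)) I \<otimes> finprod G (\<lambda>i. f i (y i)) I"
    using f_carrier[OF _ x] f_carrier[OF _ y] by (intro finprod_multf) auto
  finally show "finprod G (\<lambda>i. f i ((x \<otimes>\<^bsub>product_group I A\<^esub> y) i)) I
      = finprod G (\<lambda>i. f i (x i)) I \<otimes> finprod G (\<lambda>i. f i (y i)) I" .
qed

lemma hom_DirProd_mult:
  assumes "f \<in> hom A G" and "g \<in> hom B G"
  shows "(\<lambda>(x, y). f x \<otimes> g y) \<in> hom (A \<times>\<times> B) G"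
proof (rule homI)
  fix p q
  assume "p \<in> carrier (A \<times>\<times> B)" "q \<in> carrier (A \<times>\<times> B)"
  then show "(case p \<otimes>\<^bsub>A \<times>\<times> B\<^esub> q of (x, y) \<Rightarrow> f x \<otimes> g y)
      = (case p of (x, y) \<Rightarrow> f x \<otimes> g y) \<otimes> (case q of (x, y) \<Rightarrow> f x \<otimes> g y)"
    using assms
    by (auto simp: mult_DirProd' hom_mult m_ac hom_in_carrier[OF assms(1)] hom_in_carrier[OF assms(2)])
qed (use assms in \<open>auto dest: hom_in_carrier\<close>)

lemma iso_DirProd_mult:
  assumes "group A" and "group B"
    and f: "f \<in> hom A G" "inj_on f (carrier A)"
    and g: "g \<in> hom B G" "inj_on g (carrier B)"
    and disjoint: "f ` carrier A \<inter> g ` carrier B \<subseteq> {\<one>}"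
    and span: "f ` carrier A <#> g ` carrier B = carrier G"
  shows "(\<lambda>(x, y). f x \<otimes> g y) \<in> iso (A \<times>\<times> B) G"
proof -
  let ?\<phi> = "\<lambda>(x, y). f x \<otimes> g y"
  interpret A: group A by fact
  interpret B: group B by fact
  interpret f: group_hom A G f
    using f(1) by (simp add: group_hom_def group_hom_axioms_def)
  interpret g: group_hom B G g
    using g(1) by (simp add: group_hom_def group_hom_axioms_def)
  interpret \<phi>: group_hom "A \<times>\<times> B" G ?\<phi>
    using hom_DirProd_mult[OF f(1) g(1)]
    by (simp add: group_hom_def group_hom_axioms_def DirProd_group)
  have "x = \<one>\<^bsub>A\<^esub> \<and> y = \<one>\<^bsub>B\<^esub>"
    if x: "x \<in> carrier A" and y: "y \<in> carrier B" and eq: "f x \<otimes> g y = \<one>" for x y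
  proof -
    have "f x = g (inv\<^bsub>B\<^esub> y)"
      using inv_equality[OF eq] x y by simp
    then have "f x = \<one>"
      using disjoint x y by blast
    then show ?thesis
      using eq x y inj_onD[OF f(2), of x "\<one>\<^bsub>A\<^esub>"] inj_onD[OF g(2), of y "\<one>\<^bsub>B\<^esub>"] by simp
  qed
  then have "inj_on ?\<phi> (carrier (A \<times>\<times> B))"
    by (intro \<phi>.inj_on_if_trivial_kernel) auto
  moreover have "?\<phi> ` carrier (A \<times>\<times> B) = carrier G"
  proof
    show "?\<phi> ` carrier (A \<times>\<times> B) \<subseteq> carrier G"
      using \<phi>.hom_closed by blast
    show "carrier G \<subseteq> ?\<phi> ` carrier (A \<times>\<times> B)"
      unfolding span[symmetric] set_mult_def by auto
  qed
  ultimately show ?thesis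
    using \<phi>.homh unfolding iso_def bij_betw_def by blast
qed

end

abbreviation Z2n :: "nat \<Rightarrow> (nat \<Rightarrow> int) monoid" where
  "Z2n n \<equiv> product_group {..<n} (\<lambda>_. integer_mod_group 2)"

definition mod2_comb :: "('a, 'b) monoid_scheme \<Rightarrow> nat \<Rightarrow> (nat \<Rightarrow> 'a) \<Rightarrow> (nat \<Rightarrow> int) \<Rightarrow> 'a" where
  "mod2_comb G n a v = finprod G (\<lambda>i. a i [^]\<^bsub>G\<^esub> v i) {..<n}"

definition independent_mod2 :: "('a, 'b) monoid_scheme \<Rightarrow> nat \<Rightarrow> (nat \<Rightarrow> 'a) \<Rightarrow> bool" where
  "independent_mod2 G n a \<longleftrightarrow>
     a \<in> {..<n} \<rightarrow> two_torsion G \<and> inj_on (mod2_comb G n a) (carrier (Z2n n))"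

lemma card_carrier_Z2n: "card (carrier (Z2n n)) = 2 ^ n"
  by (simp add: card_PiE carrier_integer_mod_group)

lemma Z2n_Suc_eq_one:
  assumes "v \<in> carrier (Z2n (Suc n))" and "v n = 0"
    and "restrict v {..<n} = \<one>\<^bsub>Z2n n\<^esub>"
  shows "v = \<one>\<^bsub>Z2n (Suc n)\<^esub>"
proof (rule extensionalityI[of _ "{..<Suc n}"])
  show "v \<in> extensional {..<Suc n}"
    using assms(1) by (simp add: PiE_iff)
  fix i
  assume "i \<in> {..<Suc n}"
  moreover have "v i = 0" if "i < n"
    using fun_cong[OF assms(3), of i] that by simp
  ultimately show "v i = \<one>\<^bsub>Z2n (Suc n)\<^esub> i"
    using assms(2) by (auto simp: less_Suc_eq)
qed simp

context comm_group
begin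

lemma mod2_comb_hom:
  assumes "a \<in> {..<n} \<rightarrow> two_torsion G"
  shows "mod2_comb G n a \<in> hom (Z2n n) G"
proof -
  have "(\<lambda>k::int. a i [^] k) \<in> hom (integer_mod_group 2) G" if "i < n" for i
  proof (rule int_pow_hom_integer_mod_group)
    have "a i \<in> two_torsion G"
      using assms that by auto
    then show "a i \<in> carrier G" and "a i [^] (2::nat) = \<one>"
      by (simp_all add: two_torsion_def numeral_2_eq_2)
  qed
  then have "(\<lambda>v. finprod G (\<lambda>i. a i [^] v i) {..<n}) \<in> hom (Z2n n) G"
    by (intro hom_product_group_finprod) auto
  then show ?thesis
    by (simp add: mod2_comb_def[abs_def])
qed

lemma mod2_comb_mem_two_torsion:
  assumes "a \<in> {..<n} \<rightarrow> two_torsion G" and v: "v \<in> carrier (Z2n n)"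
  shows "mod2_comb G n a v \<in> two_torsion G"
proof -
  interpret f: group_hom "Z2n n" G "mod2_comb G n a"
    using mod2_comb_hom[OF assms(1)] by (simp add: group_hom_def group_hom_axioms_def)
  have "v \<otimes>\<^bsub>Z2n n\<^esub> v = \<one>\<^bsub>Z2n n\<^esub>"
    using v by (auto simp: PiE_iff carrier_integer_mod_group)
  then have "mod2_comb G n a v \<otimes> mod2_comb G n a v = \<one>"
    by (metis f.hom_mult[OF v v] f.hom_one)
  then show ?thesis
    using v by (simp add: two_torsion_def)
qed

lemma mod2_comb_fun_upd_Suc:
  assumes "a \<in> {..<n} \<rightarrow> carrier G" and "b \<in> carrier G"
  shows "mod2_comb G (Suc n) (a(n := b)) v = b [^] v n \<otimes> mod2_comb G n a v"
proof -
  have "finprod G (\<lambda>i. (a(n := b)) i [^] v i) {..<n} = finprod G (\<lambda>i. a i [^] v i) {..<n}"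
    using assms(1) by (intro finprod_cong') auto
  then show ?thesis
    using assms by (simp add: mod2_comb_def lessThan_Suc Pi_def)
qed

lemma mod2_comb_cong:
  assumes "a \<in> {..<n} \<rightarrow> carrier G" and "\<And>i. i < n \<Longrightarrow> v i = w i"
  shows "mod2_comb G n a v = mod2_comb G n a w"
  unfolding mod2_comb_def using assms by (intro finprod_cong') auto

lemma independent_mod2_length:
  assumes "finite (carrier G)" and "independent_mod2 G n a"
  shows "2 ^ n \<le> card (carrier G)"
proof -
  have "mod2_comb G n a ` carrier (Z2n n) \<subseteq> carrier G"
    using assms(2) mod2_comb_mem_two_torsion by (auto simp: independent_mod2_def two_torsion_def)
  then have "card (mod2_comb G n a ` carrier (Z2n n)) \<le> card (carrier G)"
    by (rule card_mono[OF assms(1)])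
  then show ?thesis
    using assms(2) card_carrier_Z2n by (metis independent_mod2_def card_image)
qed

lemma mod2_comb_fun_upd_eq_one:
  assumes indep: "independent_mod2 G n a" and b: "b \<in> two_torsion G"
    and b_new: "b \<notin> mod2_comb G n a ` carrier (Z2n n)"
    and v: "v \<in> carrier (Z2n (Suc n))" and v_ker: "mod2_comb G (Suc n) (a(n := b)) v = \<one>"
  shows "v = \<one>\<^bsub>Z2n (Suc n)\<^esub>"
proof -
  have a: "a \<in> {..<n} \<rightarrow> two_torsion G" and inj: "inj_on (mod2_comb G n a) (carrier (Z2n n))"
    using indep by (simp_all add: independent_mod2_def)
  have a_carrier: "a \<in> {..<n} \<rightarrow> carrier G" and b_carrier: "b \<in> carrier G"
    using a b by (auto simp: two_torsion_def)
  define w where "w = restrict v {..<n}"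
  have w: "w \<in> carrier (Z2n n)"
    using v by (auto simp: w_def PiE_iff)
  have c: "mod2_comb G n a w \<in> two_torsion G"
    using mod2_comb_mem_two_torsion[OF a w] .
  have split: "b [^] v n \<otimes> mod2_comb G n a w = \<one>"
    using v_ker mod2_comb_fun_upd_Suc[OF a_carrier b_carrier, of v]
      mod2_comb_cong[OF a_carrier, of v w] by (simp add: w_def)
  have "v n \<in> {0..<2}"
    using v by (simp add: PiE_iff carrier_integer_mod_group)
  moreover have "v n \<noteq> 1"
  proof
    assume "v n = 1"
    then have "b \<otimes> mod2_comb G n a w = mod2_comb G n a w \<otimes> mod2_comb G n a w"
      using split b_carrier c by (simp add: two_torsion_def)
    then have "b = mod2_comb G n a w"
      using b_carrier c right_cancel unfolding two_torsion_def by blast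
    then show False
      using b_new w by blast
  qed
  ultimately have vn: "v n = 0"
    by auto
  then have "mod2_comb G n a w = mod2_comb G n a \<one>\<^bsub>Z2n n\<^esub>"
    using split c hom_one[OF mod2_comb_hom[OF a]] by (simp add: two_torsion_def)
  then have "w = \<one>\<^bsub>Z2n n\<^esub>"
    by (rule inj_onD[OF inj _ w]) simp
  then show ?thesis
    using Z2n_Suc_eq_one[OF v vn] by (simp add: w_def)
qed

lemma independent_mod2_extend:
  assumes indep: "independent_mod2 G n a" and b: "b \<in> two_torsion G"
    and b_new: "b \<notin> mod2_comb G n a ` carrier (Z2n n)"
  shows "independent_mod2 G (Suc n) (a(n := b))"
proof -
  have a': "a(n := b) \<in> {..<Suc n} \<rightarrow> two_torsion G"
    using indep b by (auto simp: independent_mod2_def less_Suc_eq)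
  interpret f: group_hom "Z2n (Suc n)" G "mod2_comb G (Suc n) (a(n := b))"
    using mod2_comb_hom[OF a'] by (simp add: group_hom_def group_hom_axioms_def)
  have "inj_on (mod2_comb G (Suc n) (a(n := b))) (carrier (Z2n (Suc n)))"
    using mod2_comb_fun_upd_eq_one[OF indep b b_new] by (rule f.inj_on_if_trivial_kernel)
  then show ?thesis
    using a' by (simp add: independent_mod2_def)
qed

lemma exists_mod2_basis_of_two_torsion:
  assumes "finite (carrier G)"
  obtains n a where "independent_mod2 G n a" and "mod2_comb G n a ` carrier (Z2n n) = two_torsion G"
proof -
  have bound: "n \<le> card (carrier G)" if ex: "\<exists>a. independent_mod2 G n a" for n
  proof -
    obtain a where "independent_mod2 G n a"
      using ex by blast
    then have "2 ^ n \<le> card (carrier G)"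
      by (rule independent_mod2_length[OF assms])
    then show ?thesis
      using less_exp[of n] by linarith
  qed
  define N where "N = (GREATEST n. \<exists>a. independent_mod2 G n a)"
  have "\<exists>a. independent_mod2 G 0 a"
    by (simp add: independent_mod2_def carrier_integer_mod_group)
  then have "\<exists>a. independent_mod2 G N a"
    unfolding N_def by (rule GreatestI_nat[OF _ bound])
  then obtain a where a: "independent_mod2 G N a"
    by blast
  have "two_torsion G \<subseteq> mod2_comb G N a ` carrier (Z2n N)"
  proof
    fix b
    assume b: "b \<in> two_torsion G"
    show "b \<in> mod2_comb G N a ` carrier (Z2n N)"
    proof (rule ccontr)
      assume "b \<notin> mod2_comb G N a ` carrier (Z2n N)"
      then have "independent_mod2 G (Suc N) (a(N := b))"
        using independent_mod2_extend[OF a b] by blast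
      then have "Suc N \<le> N"
        unfolding N_def
        by (rule Greatest_le_nat[where P = "\<lambda>n. \<exists>a. independent_mod2 G n a", OF exI bound])
      then show False
        by simp
    qed
  qed
  moreover have "mod2_comb G N a ` carrier (Z2n N) \<subseteq> two_torsion G"
    using a mod2_comb_mem_two_torsion by (auto simp: independent_mod2_def)
  ultimately show thesis
    using that a by blast
qed

end

lemma carrier_Z2n_Z3: "carrier (Z2n_Z3 n) = (\<Pi>\<^sub>E i\<in>{..<n}. {0..<2}) \<times> {0..<3}"
  by (simp add: Z2n_Z3_def carrier_integer_mod_group)

lemma one_Z2n_Z3: "\<one>\<^bsub>Z2n_Z3 n\<^esub> = (\<lambda>i\<in>{..<n}. 0, 0)"
  by (simp add: Z2n_Z3_def)

lemma mult_Z2n_Z3: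
  "x \<otimes>\<^bsub>Z2n_Z3 n\<^esub> y = (\<lambda>i\<in>{..<n}. (fst x i + fst y i) mod 2, (snd x + snd y) mod 3)"
  by (simp add: Z2n_Z3_def mult_DirProd')

lemma group_Z2n_Z3: "group (Z2n_Z3 n)"
  unfolding Z2n_Z3_def by (intro DirProd_group product_group) simp_all

lemma Z3_factor_eq: "Z3_factor n = {\<lambda>i\<in>{..<n}. 0} \<times> {0..<3}"
  by (simp add: Z3_factor_def carrier_integer_mod_group)

lemma Z3_factor_subset_carrier: "Z3_factor n \<subseteq> carrier (Z2n_Z3 n)"
  by (auto simp: Z3_factor_def Z2n_Z3_def split: if_split_asm)

lemma (in comm_group) iso_Z2n_Z3_if_squares_in_subgroup_card_3:
  assumes fin: "finite (carrier G)" and H: "subgroup H G" "card H = 3"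
    and squares: "\<And>x. x \<in> carrier G \<Longrightarrow> x \<otimes> x \<in> H"
  shows "\<exists>n \<phi>. \<phi> \<in> iso G (Z2n_Z3 n) \<and> \<phi> ` H = Z3_factor n"
proof -
  obtain n a where indep: "independent_mod2 G n a"
    and f_image: "mod2_comb G n a ` carrier (Z2n n) = two_torsion G"
    using exists_mod2_basis_of_two_torsion[OF fin] by metis
  have a: "a \<in> {..<n} \<rightarrow> two_torsion G" and f_inj: "inj_on (mod2_comb G n a) (carrier (Z2n n))"
    using indep by (simp_all add: independent_mod2_def)
  obtain g where g_hom: "g \<in> hom (integer_mod_group 3) G"
    and g_inj: "inj_on g (carrier (integer_mod_group 3))"
    and g_image: "g ` carrier (integer_mod_group 3) = H"
    using subgroup_card_3_embedding[OF H] by metis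
  let ?\<phi> = "\<lambda>(v, k). mod2_comb G n a v \<otimes> g k"
  have "mod2_comb G n a ` carrier (Z2n n) \<inter> g ` carrier (integer_mod_group 3) \<subseteq> {\<one>}"
    unfolding f_image g_image using subgroup_card_3_square_eq_one[OF H] by (auto simp: two_torsion_def)
  moreover have "mod2_comb G n a ` carrier (Z2n n) <#> g ` carrier (integer_mod_group 3) = carrier G"
    unfolding f_image g_image by (rule two_torsion_mult_subgroup_card_3[OF H squares])
  ultimately have \<phi>_iso: "?\<phi> \<in> iso (Z2n_Z3 n) G"
    unfolding Z2n_Z3_def using iso_DirProd_mult[OF _ _ mod2_comb_hom[OF a] f_inj g_hom g_inj]
    by simp
  have "mod2_comb G n a \<one>\<^bsub>Z2n n\<^esub> = \<one>"
    using hom_one[OF mod2_comb_hom[OF a]] is_group by simp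
  then have "?\<phi> ` Z3_factor n = g ` carrier (integer_mod_group 3)"
    using g_hom by (force simp: Z3_factor_def hom_in_carrier)
  then have \<phi>_H: "?\<phi> ` Z3_factor n = H"
    using g_image by simp
  then have "inv_into (carrier (Z2n_Z3 n)) ?\<phi> ` H = Z3_factor n"
    using \<phi>_iso Z3_factor_subset_carrier[of n]
    by (simp add: iso_def bij_betw_def flip: \<phi>_H)
  moreover have "inv_into (carrier (Z2n_Z3 n)) ?\<phi> \<in> iso G (Z2n_Z3 n)"
    by (rule group.iso_set_sym[OF group_Z2n_Z3 \<phi>_iso])
  ultimately show ?thesis
    by blast
qed

context group
begin

lemma iso_Z2n_Z3_if_coset_condition:
  assumes fin: "finite (carrier G)" and H: "subgroup H G" "card H = 3"
    and cond: "\<forall>x \<in> carrier G - H. x \<otimes> x \<in> H \<and> (\<exists>y \<in> H #> x. 3 \<le> ord y)"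
  shows "\<exists>n \<phi>. \<phi> \<in> iso G (Z2n_Z3 n) \<and> \<phi> ` H = Z3_factor n"
proof -
  have squares: "x \<otimes> x \<in> H" if "x \<in> carrier G" for x
    using cond that subgroup.m_closed[OF H(1)] by blast
  have non_involution: "\<exists>y \<in> H #> x. y \<otimes> y \<noteq> \<one>" if x: "x \<in> carrier G - H" for x
  proof -
    obtain y where y: "y \<in> H #> x" "3 \<le> ord y"
      using cond x by blast
    moreover have "y \<in> carrier G"
      using y(1) x r_coset_subset_G[OF subgroup.subset[OF H(1)]] by blast
    ultimately show ?thesis
      using ord_ge_3_iff_square_ne_one[OF fin] by blast
  qed
  have "comm_group G"
    using comm_group_if_squares_in_central_subgroup[OF H(1) _ squares]
      subgroup_card_3_central[OF H squares non_involution] subgroup_card_3_square_eq_one[OF H]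
    by blast
  then show ?thesis
    using comm_group.iso_Z2n_Z3_if_squares_in_subgroup_card_3[OF _ fin H squares] by blast
qed

lemma coset_condition_if_iso_Z2n_Z3:
  assumes fin: "finite (carrier G)" and H: "H \<subseteq> carrier G"
    and \<phi>: "\<phi> \<in> iso G (Z2n_Z3 n)" and \<phi>_H: "\<phi> ` H = Z3_factor n"
  shows "\<forall>x \<in> carrier G - H. x \<otimes> x \<in> H \<and> (\<exists>y \<in> H #> x. 3 \<le> ord y)"
proof
  fix x
  assume x: "x \<in> carrier G - H"
  have hom: "\<phi> \<in> hom G (Z2n_Z3 n)" and inj: "inj_on \<phi> (carrier G)"
    using \<phi> by (simp_all add: iso_def bij_betw_def)
  have \<phi>_mult: "\<phi> (g \<otimes> g') =
      (\<lambda>i\<in>{..<n}. (fst (\<phi> g) i + fst (\<phi> g') i) mod 2, (snd (\<phi> g) + snd (\<phi> g')) mod 3)"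
    if "g \<in> carrier G" "g' \<in> carrier G" for g g'
    using hom_mult[OF hom that] by (simp add: mult_Z2n_Z3)
  have mem_H: "g \<in> H" if g: "g \<in> carrier G" and "fst (\<phi> g) = (\<lambda>i\<in>{..<n}. 0)" for g
  proof -
    have "\<phi> g \<in> \<phi> ` H"
      using hom_in_carrier[OF hom g] that(2)
      by (auto simp: \<phi>_H Z3_factor_eq carrier_Z2n_Z3 mem_Times_iff)
    then show ?thesis
      using inj g H by (auto dest: inj_onD)
  qed
  have "x \<otimes> x \<in> H"
    using x by (intro mem_H) (simp_all add: \<phi>_mult)
  moreover have "\<exists>y \<in> H #> x. 3 \<le> ord y"
  proof -
    \<comment> \<open>shift \<open>x\<close> within its coset so that its \<open>\<int>\<^sub>3\<close>-component becomes \<open>1\<close>\<close>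
    have "(\<lambda>i\<in>{..<n}. 0, (1 - snd (\<phi> x)) mod 3) \<in> \<phi> ` H"
      by (simp add: \<phi>_H Z3_factor_eq)
    then obtain z where z: "z \<in> H" "\<phi> z = (\<lambda>i\<in>{..<n}. 0, (1 - snd (\<phi> x)) mod 3)"
      by (metis imageE)
    define y where "y = z \<otimes> x"
    have zG: "z \<in> carrier G" and yG: "y \<in> carrier G"
      using z(1) x H by (auto simp: y_def)
    have "snd (\<phi> y) = 1"
      using zG x z(2) by (simp add: y_def \<phi>_mult) presburger
    then have "snd (\<phi> (y \<otimes> y)) \<noteq> snd (\<phi> \<one>)"
      using yG hom_one[OF hom is_group group_Z2n_Z3] by (simp add: \<phi>_mult one_Z2n_Z3)
    then have "3 \<le> ord y"
      using ord_ge_3_iff_square_ne_one[OF fin yG] by auto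
    moreover have "y \<in> H #> x"
      using z(1) by (auto simp: y_def r_coset_def)
    ultimately show ?thesis
      by blast
  qed
  ultimately show "x \<otimes> x \<in> H \<and> (\<exists>y \<in> H #> x. 3 \<le> ord y)"
    by blast
qed

end

theorem lemma5p1:
  fixes G (structure) and H :: "'a set"
  assumes "group G" and "finite (carrier G)" and "H \<lhd> G" and "card H = 3"
  shows "(\<forall>x \<in> carrier G - H. x \<otimes> x \<in> H \<and> (\<exists>y \<in> H #> x. group.ord G y \<ge> 3))
     \<longleftrightarrow> (\<exists>(n::nat) \<phi>. \<phi> \<in> iso G (Z2n_Z3 n) \<and> \<phi> ` H = Z3_factor n)"
proof -
  interpret group G by (rule assms(1))
  have H: "subgroup H G"
    using assms(3) by (rule normal_imp_subgroup)
  show ?thesis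
    using iso_Z2n_Z3_if_coset_condition[OF assms(2) H assms(4)]
      coset_condition_if_iso_Z2n_Z3[OF assms(2) subgroup.subset[OF H]]
    by blast
qed

end
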